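(* Let $n\ge 2$ and $f=(f_1,\dots,f_n):\mathbb{R}^n\to\mathbb{R}^n$. Then $f$ is a Laplacian map if and only if $f$ is a gradient map $f=\nabla\bar g$, where $\bar g(x_1,\dots,x_n)=g(x_1-x_n,\dots,x_{n-1}-x_n)+k x_n$ for some $g\in C^2(\mathbb{R}^{n-1})$ and some constant $k\in\mathbb{R}$.
   Context: A real $n\times n$ matrix $L=(l_{ij})$ is a Laplacian matrix if it is symmetric and $l_{ii}=-\sum_{j\neq i} l_{ij}$ for $i=1,\dots,n$. A map $f:\mathbb{R}^n\to\mathbb{R}^n$ of class $C^1$ is a Laplacian map if its Jacobian matrix $Jf(x)$ is a Laplacian matrix for every $x\in\mathbb{R}^n$. *)

theory Defs
  imports "HOL-Analysis.Analysis"
begin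

definition laplacian_matrix :: "real^'n^'n \<Rightarrow> bool" where
  "laplacian_matrix L \<longleftrightarrow> transpose L = L \<and>
     (\<forall>i. L $ i $ i = - (\<Sum>j\<in>UNIV - {i}. L $ i $ j))"

definition C1_map :: "(real^'n \<Rightarrow> real^'m) \<Rightarrow> bool" where
  "C1_map f \<longleftrightarrow> (\<forall>x. f differentiable (at x)) \<and>
     continuous_on UNIV (\<lambda>x. jacobian f (at x))"

definition laplacian_map :: "(real^'n \<Rightarrow> real^'n) \<Rightarrow> bool" where
  "laplacian_map f \<longleftrightarrow> C1_map f \<and> (\<forall>x. laplacian_matrix (jacobian f (at x)))"

definition grad :: "(real^'n \<Rightarrow> real) \<Rightarrow> real^'n \<Rightarrow> real^'n" where
  "grad g x = (\<chi> i. frechet_derivative g (at x) (axis i 1))"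

definition C2_fun :: "(real^'n \<Rightarrow> real) \<Rightarrow> bool" where
  "C2_fun g \<longleftrightarrow> (\<forall>x. g differentiable (at x)) \<and> C1_map (grad g)"

end

theory Submission
  imports Defs
begin

text \<open>
  Index the coordinates of R^n by 'm option, with None playing the role of x_n.
  A Laplacian matrix is a symmetric matrix killing the all-ones vector 1.
  If the Jacobian of f is symmetric, f is the gradient of the radial potential
  G x = integral over [0,1] of f(t x) \<cdot> x dt: differentiating under the integral
  sign, symmetry turns the x-derivative of the integrand into d/dt (t f(t x)).
  Since the Jacobian kills 1, f \<cdot> 1 is a constant k, so G y - k y_n is constant
  along 1 and hence a function g of the differences y_i - y_n; g inherits C2
  regularity from G.
  Conversely, with P the difference map, the gradient of g(P y) + k y_n is
  P^T \<nabla>g(P y) + k e_n. Its Jacobian P^T (D \<nabla>g) P kills 1 because P 1 = 0, and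
  it is symmetric by Schwarz's theorem, which follows from the mean value theorem
  applied twice to a second difference of the potential.
\<close>

lemma jacobian_eqI:
  fixes f :: "real^'n \<Rightarrow> real^'m"
  assumes "(f has_derivative (\<lambda>h. A *v h)) (at x)"
  shows "jacobian f (at x) = A"
  using frechet_derivative_at[OF assms, symmetric] by (simp add: jacobian_def)

lemma C1_map_has_derivative:
  assumes "C1_map f"
  shows "(f has_derivative (\<lambda>h. jacobian f (at x) *v h)) (at x)"
  using assms by (simp add: C1_map_def jacobian_works)

lemma C1_map_add_const:
  assumes "C1_map F"
  shows "jacobian (\<lambda>x. F x + c) (at x) = jacobian F (at x)"
    and "C1_map (\<lambda>x. F x + c)"
proof -
  have d: "((\<lambda>x. F x + c) has_derivative (\<lambda>h. jacobian F (at y) *v h)) (at y)" for y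
    using has_derivative_add_const[OF C1_map_has_derivative[OF assms]] .
  show "jacobian (\<lambda>x. F x + c) (at x) = jacobian F (at x)"
    by (rule jacobian_eqI[OF d])
  show "C1_map (\<lambda>x. F x + c)"
    using d assms by (auto simp: C1_map_def jacobian_eqI[OF d] differentiable_def)
qed

lemma C1_map_linear_comp:
  fixes F :: "real^'a \<Rightarrow> real^'b" and A :: "real^'b \<Rightarrow> real^'c" and B :: "real^'d \<Rightarrow> real^'a"
  assumes F: "C1_map F" and "linear A" "linear B"
  shows "jacobian (\<lambda>x. A (F (B x))) (at x) = matrix A ** jacobian F (at (B x)) ** matrix B"
    and "C1_map (\<lambda>x. A (F (B x)))"
proof -
  have A: "matrix A *v y = A y" for y
    by (rule fun_cong[OF matrix_vector_mul(2)[OF assms(2)]])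
  have B: "matrix B *v y = B y" for y
    by (rule fun_cong[OF matrix_vector_mul(2)[OF assms(3)]])
  have d: "((\<lambda>x. A (F (B x))) has_derivative
      (\<lambda>h. (matrix A ** jacobian F (at (B y)) ** matrix B) *v h)) (at y)" for y
  proof -
    have "(A \<circ> (F \<circ> B) has_derivative A \<circ> ((\<lambda>h. jacobian F (at (B y)) *v h) \<circ> B)) (at y)"
      using assms(2,3) by (intro diff_chain_at linear_imp_has_derivative C1_map_has_derivative F)
    then show ?thesis
      by (simp add: comp_def A B flip: matrix_vector_mul_assoc)
  qed
  show "jacobian (\<lambda>x. A (F (B x))) (at x) = matrix A ** jacobian F (at (B x)) ** matrix B"
    by (rule jacobian_eqI[OF d])
  have "continuous_on UNIV (\<lambda>y. jacobian F (at (B y)))"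
    using F assms(3) unfolding C1_map_def linear_conv_bounded_linear
    by (auto intro: continuous_on_compose2 linear_continuous_on)
  then have "continuous_on UNIV (\<lambda>y. matrix A ** jacobian F (at (B y)) ** matrix B)"
    unfolding matrix_matrix_mult_def by (intro continuous_intros)
  then show "C1_map (\<lambda>x. A (F (B x)))"
    using d unfolding C1_map_def jacobian_eqI[OF d] by (auto simp: differentiable_def)
qed

section \<open>Gradients and symmetry of second derivatives\<close>

lemma grad_eqI:
  assumes "(g has_derivative (\<lambda>h. v \<bullet> h)) (at z)"
  shows "grad g z = v"
  using frechet_derivative_at[OF assms, symmetric] by (simp add: grad_def inner_axis vec_eq_iff)

lemma C2_fun_has_derivative:
  assumes "C2_fun g"
  shows "(g has_derivative (\<lambda>h. grad g z \<bullet> h)) (at z)"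
proof -
  obtain D where D: "(g has_derivative D) (at z)"
    using assms by (auto simp: C2_fun_def differentiable_def)
  have "D = (\<lambda>h. adjoint D 1 \<bullet> h)"
    using adjoint_works[OF has_derivative_linear[OF D]] by (simp add: fun_eq_iff inner_commute)
  with D have "(g has_derivative (\<lambda>h. adjoint D 1 \<bullet> h)) (at z)" by simp
  then show ?thesis using grad_eqI by metis
qed

lemma has_derivative_inner_linear_comp:
  fixes G :: "'a::euclidean_space \<Rightarrow> real" and L :: "'b::euclidean_space \<Rightarrow> 'a"
  assumes "(G has_derivative (\<lambda>h. v \<bullet> h)) (at (L z))" and "linear L"
  shows "((\<lambda>z. G (L z)) has_derivative (\<lambda>h. adjoint L v \<bullet> h)) (at z)"
proof -
  have "(G \<circ> L has_derivative (\<lambda>h. v \<bullet> h) \<circ> L) (at z)"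
    using assms by (intro diff_chain_at linear_imp_has_derivative)
  then show ?thesis by (simp add: comp_def adjoint_clauses(2)[OF \<open>linear L\<close>])
qed

lemma has_real_derivative_along_line:
  assumes "(G has_derivative D) (at (p + t *\<^sub>R a))"
  shows "((\<lambda>t. G (p + t *\<^sub>R a)) has_real_derivative D a) (at t)"
proof -
  have "((\<lambda>t. p + t *\<^sub>R a) has_derivative (\<lambda>h. h *\<^sub>R a)) (at t)"
    by (auto intro!: derivative_eq_intros)
  from diff_chain_at[OF this assms]
  have "((\<lambda>t. G (p + t *\<^sub>R a)) has_derivative (\<lambda>h. D (h *\<^sub>R a))) (at t)"
    by (simp add: comp_def)
  then show ?thesis
    unfolding has_field_derivative_def
    by (rule has_derivative_eq_rhs) (simp add: fun_eq_iff linear_cmul[OF has_derivative_linear[OF assms]])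
qed

lemma second_difference_mean_value:
  fixes G :: "real^'n \<Rightarrow> real" and F :: "real^'n \<Rightarrow> real^'n"
  assumes dG: "\<And>y. (G has_derivative (\<lambda>h. F y \<bullet> h)) (at y)" and F: "C1_map F" and "s > 0"
  obtains p where "norm (p - x) \<le> s * (norm a + norm b)"
    and "G (x + s *\<^sub>R a + s *\<^sub>R b) - G (x + s *\<^sub>R a) - G (x + s *\<^sub>R b) + G x
           = s\<^sup>2 * ((jacobian F (at p) *v b) \<bullet> a)"
proof -
  define \<phi> where "\<phi> u = G (x + s *\<^sub>R b + u *\<^sub>R a) - G (x + u *\<^sub>R a)" for u
  have "(\<phi> has_real_derivative (F (x + s *\<^sub>R b + u *\<^sub>R a) \<bullet> a - F (x + u *\<^sub>R a) \<bullet> a)) (at u)"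
    if "0 \<le> u" "u \<le> s" for u
    unfolding \<phi>_def by (intro DERIV_diff has_real_derivative_along_line dG)
  from MVT2[OF \<open>s > 0\<close> this] obtain \<xi> where \<xi>: "0 < \<xi>" "\<xi> < s"
    and "\<phi> s - \<phi> 0 = s * (F (x + s *\<^sub>R b + \<xi> *\<^sub>R a) \<bullet> a - F (x + \<xi> *\<^sub>R a) \<bullet> a)"
    by auto
  then have \<phi>_diff: "G (x + s *\<^sub>R a + s *\<^sub>R b) - G (x + s *\<^sub>R a) - G (x + s *\<^sub>R b) + G x
      = s * (F (x + \<xi> *\<^sub>R a + s *\<^sub>R b) \<bullet> a - F (x + \<xi> *\<^sub>R a) \<bullet> a)"
    by (simp add: \<phi>_def add_ac)
  define \<psi> where "\<psi> v = F (x + \<xi> *\<^sub>R a + v *\<^sub>R b) \<bullet> a" for v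
  have "(\<psi> has_real_derivative ((jacobian F (at (x + \<xi> *\<^sub>R a + v *\<^sub>R b)) *v b) \<bullet> a)) (at v)"
    if "0 \<le> v" "v \<le> s" for v unfolding \<psi>_def
    by (rule has_real_derivative_along_line[OF has_derivative_inner_left[OF C1_map_has_derivative[OF F]]])
  from MVT2[OF \<open>s > 0\<close> this] obtain \<eta> where \<eta>: "0 < \<eta>" "\<eta> < s"
    and "\<psi> s - \<psi> 0 = s * ((jacobian F (at (x + \<xi> *\<^sub>R a + \<eta> *\<^sub>R b)) *v b) \<bullet> a)"
    by auto
  then have "G (x + s *\<^sub>R a + s *\<^sub>R b) - G (x + s *\<^sub>R a) - G (x + s *\<^sub>R b) + G x
      = s\<^sup>2 * ((jacobian F (at (x + \<xi> *\<^sub>R a + \<eta> *\<^sub>R b)) *v b) \<bullet> a)"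
    by (simp add: \<phi>_diff \<psi>_def power2_eq_square)
  moreover have "norm (x + \<xi> *\<^sub>R a + \<eta> *\<^sub>R b - x) \<le> s * (norm a + norm b)"
  proof -
    have "norm (\<xi> *\<^sub>R a + \<eta> *\<^sub>R b) \<le> \<xi> * norm a + \<eta> * norm b"
      using norm_triangle_ineq[of "\<xi> *\<^sub>R a" "\<eta> *\<^sub>R b"] \<xi> \<eta> by simp
    also have "\<dots> \<le> s * norm a + s * norm b"
      using \<xi> \<eta> by (intro add_mono mult_right_mono) auto
    finally show ?thesis by (simp add: algebra_simps)
  qed
  ultimately show thesis using that by blast
qed

lemma second_difference_axis_mean_value:
  fixes G :: "real^'n \<Rightarrow> real" and F :: "real^'n \<Rightarrow> real^'n"
  assumes dG: "\<And>y. (G has_derivative (\<lambda>h. F y \<bullet> h)) (at y)" and F: "C1_map F" and "s > 0"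
  obtains p where "dist p x \<le> 2 * s"
    and "G (x + s *\<^sub>R axis i 1 + s *\<^sub>R axis j 1) - G (x + s *\<^sub>R axis i 1) - G (x + s *\<^sub>R axis j 1) + G x
           = s\<^sup>2 * jacobian F (at p) $ i $ j"
proof -
  obtain p where "norm (p - x) \<le> s * (norm (axis i 1 :: real^'n) + norm (axis j 1 :: real^'n))"
    and "G (x + s *\<^sub>R axis i 1 + s *\<^sub>R axis j 1) - G (x + s *\<^sub>R axis i 1) - G (x + s *\<^sub>R axis j 1) + G x
           = s\<^sup>2 * ((jacobian F (at p) *v axis j 1) \<bullet> axis i 1)"
    using second_difference_mean_value[OF dG F \<open>s > 0\<close>] .
  then show thesis
    by (intro that[of p]) (simp_all add: dist_norm matrix_vector_mult_basis column_def inner_axis mult.commute)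
qed

lemma abs_matrix_entry_diff_le_dist: "\<bar>M $ i $ j - N $ i $ j\<bar> \<le> dist M (N :: real^'n^'m)"
proof -
  have "\<bar>(M - N) $ i $ j\<bar> \<le> norm ((M - N) $ i)" by (rule component_le_norm_cart)
  also have "\<dots> \<le> norm (M - N)" by (rule Finite_Cartesian_Product.norm_nth_le)
  finally show ?thesis by (simp add: dist_norm)
qed

lemma jacobian_of_gradient_symmetric:
  fixes G :: "real^'n \<Rightarrow> real" and F :: "real^'n \<Rightarrow> real^'n"
  assumes dG: "\<And>y. (G has_derivative (\<lambda>h. F y \<bullet> h)) (at y)" and F: "C1_map F"
  shows "transpose (jacobian F (at x)) = jacobian F (at x)"
proof -
  let ?J = "\<lambda>y. jacobian F (at y)"
  have "?J x $ i $ j = ?J x $ j $ i" for i j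
  proof (rule ccontr)
    define e where "e = \<bar>?J x $ i $ j - ?J x $ j $ i\<bar> / 2"
    assume "?J x $ i $ j \<noteq> ?J x $ j $ i"
    then have "e > 0" by (simp add: e_def)
    moreover have "continuous (at x) ?J"
      using F by (simp add: C1_map_def continuous_on_eq_continuous_at)
    ultimately obtain \<delta> where "\<delta> > 0" and \<delta>: "\<And>y. dist y x < \<delta> \<Longrightarrow> dist (?J y) (?J x) < e"
      unfolding continuous_at_eps_delta by blast
    define s where "s = \<delta> / 4"
    have "s > 0" and "2 * s < \<delta>" using \<open>\<delta> > 0\<close> by (simp_all add: s_def)
    obtain p where "dist p x \<le> 2 * s"
      and p_diff: "G (x + s *\<^sub>R axis i 1 + s *\<^sub>R axis j 1) - G (x + s *\<^sub>R axis i 1) - G (x + s *\<^sub>R axis j 1) + G x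
        = s\<^sup>2 * ?J p $ i $ j"
      using second_difference_axis_mean_value[OF dG F \<open>s > 0\<close>] .
    obtain q where "dist q x \<le> 2 * s"
      and q_diff: "G (x + s *\<^sub>R axis j 1 + s *\<^sub>R axis i 1) - G (x + s *\<^sub>R axis j 1) - G (x + s *\<^sub>R axis i 1) + G x
        = s\<^sup>2 * ?J q $ j $ i"
      using second_difference_axis_mean_value[OF dG F \<open>s > 0\<close>] .
    have swap: "x + s *\<^sub>R axis j 1 + s *\<^sub>R axis i 1 = x + s *\<^sub>R axis i 1 + s *\<^sub>R axis j 1"
      by (simp add: add_ac)
    have "s\<^sup>2 * ?J p $ i $ j = s\<^sup>2 * ?J q $ j $ i"
      using p_diff q_diff unfolding swap by linarith
    then have "?J p $ i $ j = ?J q $ j $ i"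
      using \<open>s > 0\<close> by simp
    moreover have "\<bar>?J p $ i $ j - ?J x $ i $ j\<bar> < e" "\<bar>?J q $ j $ i - ?J x $ j $ i\<bar> < e"
      using \<delta> abs_matrix_entry_diff_le_dist \<open>dist p x \<le> 2 * s\<close> \<open>dist q x \<le> 2 * s\<close> \<open>2 * s < \<delta>\<close>
      by (meson order_le_less_trans)+
    ultimately show False
      unfolding e_def by (smt (verit, best) field_sum_of_halves)
  qed
  then show ?thesis by (simp add: transpose_def vec_eq_iff)
qed

section \<open>Poincare lemma\<close>

lemma symmetric_matrix_inner:
  fixes A :: "real^'n^'n"
  assumes "transpose A = A"
  shows "(A *v h) \<bullet> x = h \<bullet> (A *v x)"
  by (metis assms dot_lmul_matrix vector_transpose_matrix)

definition radial_potential :: "(real^'n \<Rightarrow> real^'n) \<Rightarrow> real^'n \<Rightarrow> real" where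
  "radial_potential F x = integral {0..1} (\<lambda>t. F (t *\<^sub>R x) \<bullet> x)"

lemma has_derivative_radial_integrand:
  fixes F :: "real^'n \<Rightarrow> real^'n"
  assumes F: "C1_map F" and sym: "transpose (jacobian F (at (t *\<^sub>R x))) = jacobian F (at (t *\<^sub>R x))"
  shows "((\<lambda>x. F (t *\<^sub>R x) \<bullet> x) has_derivative
           (\<lambda>h. h \<bullet> (F (t *\<^sub>R x) + t *\<^sub>R (jacobian F (at (t *\<^sub>R x)) *v x)))) (at x)"
proof -
  have "((\<lambda>x. t *\<^sub>R x) has_derivative (\<lambda>h. t *\<^sub>R h)) (at x)"
    by (auto intro!: derivative_eq_intros)
  from diff_chain_at[OF this C1_map_has_derivative[OF F]]
  have "((\<lambda>x. F (t *\<^sub>R x)) has_derivative (\<lambda>h. jacobian F (at (t *\<^sub>R x)) *v (t *\<^sub>R h))) (at x)"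
    by (simp add: comp_def)
  moreover have "x \<bullet> (jacobian F (at (t *\<^sub>R x)) *v h) = h \<bullet> (jacobian F (at (t *\<^sub>R x)) *v x)" for h
    using symmetric_matrix_inner[OF sym] by (metis inner_commute)
  ultimately show ?thesis
    by (auto intro!: derivative_eq_intros
        simp: fun_eq_iff matrix_vector_mult_scaleR inner_add_right inner_commute)
qed

lemma integral_radial_integrand_derivative:
  fixes F :: "real^'n \<Rightarrow> real^'n"
  assumes F: "C1_map F"
  shows "integral {0..1} (\<lambda>t. h \<bullet> (F (t *\<^sub>R x) + t *\<^sub>R (jacobian F (at (t *\<^sub>R x)) *v x))) = F x \<bullet> h"
proof -
  define w where "w t = t * (F (t *\<^sub>R x) \<bullet> h)" for t :: real
  have "((\<lambda>t. F (0 + t *\<^sub>R x) \<bullet> h) has_real_derivative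
          (jacobian F (at (0 + t *\<^sub>R x)) *v x) \<bullet> h) (at t)" for t
    by (rule has_real_derivative_along_line[OF has_derivative_inner_left[OF C1_map_has_derivative[OF F]]])
  then have "(w has_real_derivative h \<bullet> (F (t *\<^sub>R x) + t *\<^sub>R (jacobian F (at (t *\<^sub>R x)) *v x))) (at t)" for t
    unfolding w_def
    by (auto intro!: derivative_eq_intros simp: inner_commute algebra_simps)
  then have "((\<lambda>t. h \<bullet> (F (t *\<^sub>R x) + t *\<^sub>R (jacobian F (at (t *\<^sub>R x)) *v x))) has_integral w 1 - w 0) {0..1}"
    by (intro fundamental_theorem_of_calculus)
       (auto simp: has_real_derivative_iff_has_vector_derivative[symmetric] intro: has_field_derivative_at_within)
  then show ?thesis by (simp add: integral_unique w_def)
qed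

lemma radial_potential_has_derivative:
  fixes F :: "real^'n \<Rightarrow> real^'n"
  assumes F: "C1_map F" and sym: "\<And>y. transpose (jacobian F (at y)) = jacobian F (at y)"
  shows "(radial_potential F has_derivative (\<lambda>h. F x \<bullet> h)) (at x)"
proof -
  define V where "V x t = F (t *\<^sub>R x) + t *\<^sub>R (jacobian F (at (t *\<^sub>R x)) *v x)" for x and t :: real
  have "continuous_on UNIV F"
    using F by (meson C1_map_has_derivative continuous_at_imp_continuous_on has_derivative_continuous)
  then have cont_F: "continuous_on S (\<lambda>z. F (a z))" if "continuous_on S a" for S a
    using continuous_on_compose2 that by blast
  have "continuous_on UNIV (\<lambda>y. jacobian F (at y))"
    using F by (simp add: C1_map_def)
  then have cont_J: "continuous_on S (\<lambda>z. jacobian F (at (a z)))" if "continuous_on S a" for S a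
    using continuous_on_compose2 that by blast
  have cont_V: "continuous_on S (\<lambda>z. blinfun_inner_left (V (a z) (b z)))"
    if "continuous_on S a" "continuous_on S b" for S a b
    unfolding V_def matrix_vector_mult_def
    by (intro continuous_on_compose2[OF linear_continuous_on[OF bounded_linear_blinfun_inner_left]]
        continuous_intros cont_F cont_J that) auto
  have "((\<lambda>x. integral (cbox 0 1) (\<lambda>t. F (t *\<^sub>R x) \<bullet> x)) has_derivative
          integral (cbox 0 1) (\<lambda>t. blinfun_inner_left (V x t))) (at x within UNIV)"
  proof (rule leibniz_rule)
    show "((\<lambda>x. F (t *\<^sub>R x) \<bullet> x) has_derivative blinfun_inner_left (V y t)) (at y within UNIV)"
      for y t using has_derivative_radial_integrand[OF F sym] by (simp add: V_def)
    show "(\<lambda>t. F (t *\<^sub>R y) \<bullet> y) integrable_on cbox 0 1" for y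
      by (intro integrable_continuous continuous_intros cont_F)
    show "continuous_on (UNIV \<times> cbox 0 1) (\<lambda>(x, t). blinfun_inner_left (V x t))"
      unfolding case_prod_beta' by (intro cont_V continuous_intros)
  qed auto
  moreover have "blinfun_apply (integral (cbox 0 1) (\<lambda>t. blinfun_inner_left (V x t))) = (\<lambda>h. F x \<bullet> h)"
  proof
    fix h
    have "(\<lambda>t. blinfun_inner_left (V x t)) integrable_on cbox 0 1"
      by (intro integrable_continuous cont_V continuous_intros)
    then show "blinfun_apply (integral (cbox 0 1) (\<lambda>t. blinfun_inner_left (V x t))) h = F x \<bullet> h"
      using integral_radial_integrand_derivative[OF F] by (simp add: blinfun_apply_integral V_def)
  qed
  ultimately show ?thesis
    unfolding radial_potential_def by simp
qed

definition diff_coords :: "real^'m option \<Rightarrow> real^'m" where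
  "diff_coords y = (\<chi> j. y $ Some j - y $ None)"

definition extend_zero :: "real^'m \<Rightarrow> real^'m option" where
  "extend_zero z = (\<chi> i. case i of None \<Rightarrow> 0 | Some j \<Rightarrow> z $ j)"

definition laplacian_potential :: "(real^'m \<Rightarrow> real) \<Rightarrow> real \<Rightarrow> real^'m option \<Rightarrow> real" where
  "laplacian_potential g k y = g (diff_coords y) + k * y $ None"

lemma linear_diff_coords: "linear diff_coords"
  by (rule linearI) (simp_all add: diff_coords_def vec_eq_iff algebra_simps)

lemma linear_extend_zero: "linear extend_zero"
  by (rule linearI) (simp_all add: extend_zero_def vec_eq_iff split: option.split)

lemma diff_coords_1: "diff_coords 1 = 0"
  by (simp add: diff_coords_def vec_eq_iff)

lemma extend_zero_diff_coords: "extend_zero (diff_coords y) + y $ None *\<^sub>R 1 = y"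
  by (simp add: vec_eq_iff extend_zero_def diff_coords_def split: option.split)

\<comment> \<open>\<open>1 :: real^'n\<close> is the all-ones vector, so \<open>L *v 1\<close> is the vector of row sums.\<close>
lemma laplacian_matrix_iff: "laplacian_matrix L \<longleftrightarrow> transpose L = L \<and> L *v 1 = 0"
proof -
  have "(L *v 1) $ i = L $ i $ i + (\<Sum>j\<in>UNIV - {i}. L $ i $ j)" for i
    by (simp add: matrix_vector_mult_def sum.remove)
  then show ?thesis
    unfolding laplacian_matrix_def vec_eq_iff by (simp add: eq_neg_iff_add_eq_0)
qed

lemma laplacian_map_inner_ones_constant:
  assumes "laplacian_map f"
  obtains k where "\<And>x. f x \<bullet> 1 = k"
proof -
  have "C1_map f" and L: "\<And>x. laplacian_matrix (jacobian f (at x))"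
    using assms by (auto simp: laplacian_map_def)
  have "((\<lambda>x. f x \<bullet> 1) has_derivative (\<lambda>h. 0)) (at x within UNIV)" for x
  proof -
    have "(\<lambda>h. (jacobian f (at x) *v h) \<bullet> 1) = (\<lambda>h. 0)"
      using L[of x] by (simp add: fun_eq_iff laplacian_matrix_iff symmetric_matrix_inner)
    with has_derivative_inner_left[OF C1_map_has_derivative[OF \<open>C1_map f\<close>, of x], of 1]
    show ?thesis by simp
  qed
  then show thesis
    using has_derivative_zero_constant[of UNIV] that by auto
qed

lemma potential_eq_laplacian_potential:
  fixes G :: "real^('m::finite option) \<Rightarrow> real"
  assumes dG: "\<And>y. (G has_derivative (\<lambda>h. f y \<bullet> h)) (at y)" and k: "\<And>y. f y \<bullet> 1 = k"
  shows "G = laplacian_potential (\<lambda>z. G (extend_zero z)) k"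
proof
  fix y
  define \<psi> where "\<psi> t = G (extend_zero (diff_coords y) + t *\<^sub>R 1) - k * t" for t
  have "(\<psi> has_real_derivative 0) (at t)" for t
  proof -
    have "(\<psi> has_real_derivative (f (extend_zero (diff_coords y) + t *\<^sub>R 1) \<bullet> 1 - k * 1)) (at t)"
      unfolding \<psi>_def by (intro DERIV_diff has_real_derivative_along_line dG DERIV_cmult DERIV_ident)
    then show ?thesis by (simp add: k)
  qed
  then have "\<psi> (y $ None) = \<psi> 0"
    using DERIV_isconst_all by blast
  then show "G y = laplacian_potential (\<lambda>z. G (extend_zero z)) k y"
    by (simp add: \<psi>_def laplacian_potential_def extend_zero_diff_coords)
qed

lemma C2_fun_potential_linear_comp:
  fixes G :: "real^'a \<Rightarrow> real" and L :: "real^'b \<Rightarrow> real^'a"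
  assumes dG: "\<And>y. (G has_derivative (\<lambda>h. f y \<bullet> h)) (at y)" and "C1_map f" "linear L"
  shows "C2_fun (\<lambda>z. G (L z))"
proof -
  have d: "((\<lambda>z. G (L z)) has_derivative (\<lambda>h. adjoint L (f (L z)) \<bullet> h)) (at z)" for z
    by (rule has_derivative_inner_linear_comp[OF dG \<open>linear L\<close>])
  then have "grad (\<lambda>z. G (L z)) = (\<lambda>z. adjoint L (f (L z)))"
    by (simp add: fun_eq_iff grad_eqI)
  moreover have "C1_map (\<lambda>z. adjoint L (f (L z)))"
    by (rule C1_map_linear_comp(2)[OF \<open>C1_map f\<close> adjoint_linear[OF \<open>linear L\<close>] \<open>linear L\<close>])
  ultimately show ?thesis
    using d by (auto simp: C2_fun_def differentiable_def)
qed

lemma laplacian_map_imp_potential: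
  assumes "laplacian_map f"
  shows "\<exists>g k. C2_fun g \<and> (\<forall>x. (laplacian_potential g k has_derivative (\<lambda>h. f x \<bullet> h)) (at x))"
proof -
  have "C1_map f" and sym: "\<And>x. transpose (jacobian f (at x)) = jacobian f (at x)"
    using assms by (auto simp: laplacian_map_def laplacian_matrix_def)
  obtain k where k: "\<And>x. f x \<bullet> 1 = k"
    using laplacian_map_inner_ones_constant[OF assms] by blast
  have dG: "(radial_potential f has_derivative (\<lambda>h. f x \<bullet> h)) (at x)" for x
    by (rule radial_potential_has_derivative[OF \<open>C1_map f\<close> sym])
  have "C2_fun (\<lambda>z. radial_potential f (extend_zero z))"
    by (rule C2_fun_potential_linear_comp[OF dG \<open>C1_map f\<close> linear_extend_zero])
  moreover note potential_eq_laplacian_potential[OF dG k]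
  ultimately show ?thesis
    using dG by metis
qed

lemma laplacian_potential_has_derivative:
  assumes "C2_fun g"
  shows "(laplacian_potential g k has_derivative
           (\<lambda>h. (adjoint diff_coords (grad g (diff_coords x)) + k *\<^sub>R axis None 1) \<bullet> h)) (at x)"
proof -
  have "((\<lambda>y. g (diff_coords y)) has_derivative (\<lambda>h. adjoint diff_coords (grad g (diff_coords x)) \<bullet> h)) (at x)"
    by (rule has_derivative_inner_linear_comp[OF C2_fun_has_derivative[OF assms] linear_diff_coords])
  moreover have "((\<lambda>y. k * y $ None) has_derivative (\<lambda>h. k * h $ None)) (at x)"
    by (intro has_derivative_mult_right bounded_linear_imp_has_derivative bounded_linear_vec_nth)
  ultimately show ?thesis
    unfolding laplacian_potential_def
    by (rule has_derivative_eq_rhs[OF has_derivative_add]) (simp add: fun_eq_iff inner_add_left inner_axis')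
qed

lemma potential_imp_laplacian_map:
  fixes f :: "real^('m::finite option) \<Rightarrow> real^('m option)"
  assumes g: "C2_fun g" and df: "\<And>x. (laplacian_potential g k has_derivative (\<lambda>h. f x \<bullet> h)) (at x)"
  shows "laplacian_map f"
proof -
  let ?A = "adjoint (diff_coords :: real^'m option \<Rightarrow> real^'m)"
  have f: "f = (\<lambda>x. ?A (grad g (diff_coords x)) + k *\<^sub>R axis None 1)"
    using has_derivative_unique[OF df laplacian_potential_has_derivative[OF g]]
    by (metis vector_eq_rdot)
  have "C1_map (grad g)"
    using g by (simp add: C2_fun_def)
  note comp = C1_map_linear_comp[OF this adjoint_linear[OF linear_diff_coords] linear_diff_coords]
  have C1: "C1_map f" and J: "jacobian f (at x) = matrix ?A ** jacobian (grad g) (at (diff_coords x)) ** matrix diff_coords" for x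
    unfolding f by (simp_all add: C1_map_add_const comp)
  have "jacobian f (at x) *v 1 = 0" for x
  proof -
    have "matrix diff_coords *v (1 :: real^'m option) = 0"
      using matrix_vector_mul(2)[OF linear_diff_coords] diff_coords_1 by metis
    then show ?thesis by (simp add: J flip: matrix_vector_mul_assoc)
  qed
  moreover have "transpose (jacobian f (at x)) = jacobian f (at x)" for x
    by (rule jacobian_of_gradient_symmetric[OF df C1])
  ultimately show ?thesis
    by (simp add: laplacian_map_def laplacian_matrix_iff C1)
qed

theorem theorem4p3:
  fixes f :: "real^('m::finite option) \<Rightarrow> real^('m option)"
  shows "laplacian_map f \<longleftrightarrow>
    (\<exists>(g :: real^'m \<Rightarrow> real) (k :: real). C2_fun g \<and>
       (\<forall>x. ((\<lambda>y. g (\<chi> j. y $ Some j - y $ None) + k * y $ None)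
              has_derivative (\<lambda>h. f x \<bullet> h)) (at x)))"
proof -
  have "(\<lambda>y. g (\<chi> j. y $ Some j - y $ None) + k * y $ None) = laplacian_potential g k"
    for g :: "real^'m \<Rightarrow> real" and k
    by (simp add: fun_eq_iff laplacian_potential_def diff_coords_def)
  then show ?thesis
    using laplacian_map_imp_potential potential_imp_laplacian_map by metis
qed

end
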